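(* Let $r\in\mathcal R$ be a universal proper distance matrix and $(\mathcal U_r,\rho_r)$ the completion of $(\mathbb N,r)$. For any finite set $\{a_1,\dots,a_n\}\subset\mathcal U_r$ and any distance matrix $q$ of order $N>n$ whose upper-left $n\times n$ corner equals $\{\rho_r(a_i,a_j)\}_{i,j=1}^n$, there exist points $a_{n+1},\dots,a_N\in\mathcal U_r$ such that the distance matrix $\{\rho_r(a_i,a_j)\}_{i,j=1}^N$ equals $q$.
   Context: $\mathcal R$ is the set of infinite real matrices $r=\{r_{i,j}\}_{i,j\ge1}$ with $r_{i,i}=0$, $r_{i,j}\ge0$, $r_{i,j}=r_{j,i}$, $r_{i,k}+r_{k,j}\ge r_{i,j}$; a distance matrix of order $N$ is an $N\times N$ matrix with these properties; $r$ is proper if $r_{i,j}>0$ for $i\ne j$; $p_n(r)$ is the upper-left $n\times n$ corner. For an $n\times n$ distance matrix $q$, $A(q)=\{a\in\mathbb R^n:|a_i-a_j|\le q_{i,j}\le a_i+a_j\ \forall i,j\}$. A proper $r\in\mathcal R$ is universal if for every $n$, every $a\in A(p_n(r))$ and every $\epsilon>0$ there is $m\in\mathbb N$ with $\max_{1\le i\le n}|r_{i,m}-a_i|<\epsilon$. *)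

theory Defs
  imports "HOL-Analysis.Analysis"
begin

(* Matrices are functions nat => nat => real, indexed from 1 (entries with index 0 are ignored). *)

definition distance_matrix :: "nat \<Rightarrow> (nat \<Rightarrow> nat \<Rightarrow> real) \<Rightarrow> bool" where
  "distance_matrix N q \<longleftrightarrow>
     (\<forall>i\<in>{1..N}. q i i = 0) \<and>
     (\<forall>i\<in>{1..N}. \<forall>j\<in>{1..N}. q i j \<ge> 0 \<and> q i j = q j i) \<and>
     (\<forall>i\<in>{1..N}. \<forall>j\<in>{1..N}. \<forall>k\<in>{1..N}. q i k + q k j \<ge> q i j)"

definition inR :: "(nat \<Rightarrow> nat \<Rightarrow> real) \<Rightarrow> bool" where
  "inR r \<longleftrightarrow>
     (\<forall>i\<ge>1. r i i = 0) \<and>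
     (\<forall>i\<ge>1. \<forall>j\<ge>1. r i j \<ge> 0 \<and> r i j = r j i) \<and>
     (\<forall>i\<ge>1. \<forall>j\<ge>1. \<forall>k\<ge>1. r i k + r k j \<ge> r i j)"

definition proper :: "(nat \<Rightarrow> nat \<Rightarrow> real) \<Rightarrow> bool" where
  "proper r \<longleftrightarrow> inR r \<and> (\<forall>i\<ge>1. \<forall>j\<ge>1. i \<noteq> j \<longrightarrow> r i j > 0)"

definition corner :: "nat \<Rightarrow> (nat \<Rightarrow> nat \<Rightarrow> real) \<Rightarrow> (nat \<Rightarrow> nat \<Rightarrow> real)" where
  "corner n r = (\<lambda>i j. if i \<le> n \<and> j \<le> n then r i j else 0)"

definition Aset :: "nat \<Rightarrow> (nat \<Rightarrow> nat \<Rightarrow> real) \<Rightarrow> (nat \<Rightarrow> real) set" where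
  "Aset n q = {a. \<forall>i\<in>{1..n}. \<forall>j\<in>{1..n}. \<bar>a i - a j\<bar> \<le> q i j \<and> q i j \<le> a i + a j}"

definition universal :: "(nat \<Rightarrow> nat \<Rightarrow> real) \<Rightarrow> bool" where
  "universal r \<longleftrightarrow> proper r \<and>
     (\<forall>n. \<forall>a\<in>Aset n (corner n r). \<forall>\<epsilon>>0. \<exists>m\<ge>1. \<forall>i\<in>{1..n}. \<bar>r i m - a i\<bar> < \<epsilon>)"

end

theory Submission
  imports Defs
begin

(* Prescribed distances d i to finitely many points p i can only be realised by a point if they
   are Katetov: |d i - d j| <= dist (p i) (p j) <= d i + d j. Universality of r says precisely that
   Katetov data on e 1, ..., e L is approximately realised by some e m; via the extension
   x |-> min_i (d i + dist x (p i)) and density of the e m, Katetov data on arbitrary points is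
   approximately realised too. Completeness upgrades this to exact realisation: adjoining the
   current approximation y as a new point with prescribed distance max_i |dist y (p i) - d i| keeps
   the data Katetov, so the next approximation can be taken close to y, and the approximations
   form a Cauchy sequence. Each column of q is Katetov data for the points already placed, so
   a (n+1), ..., a N can be added one at a time. *)

definition katetov :: "'i set \<Rightarrow> ('i \<Rightarrow> 'a::metric_space) \<Rightarrow> ('i \<Rightarrow> real) \<Rightarrow> bool" where
  "katetov I p d \<longleftrightarrow>
     (\<forall>i\<in>I. \<forall>j\<in>I. \<bar>d i - d j\<bar> \<le> dist (p i) (p j) \<and> dist (p i) (p j) \<le> d i + d j)"

lemma katetovD:
  assumes "katetov I p d" "i \<in> I" "j \<in> I"
  shows "\<bar>d i - d j\<bar> \<le> dist (p i) (p j)" "dist (p i) (p j) \<le> d i + d j"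
  using assms unfolding katetov_def by auto

lemma katetov_insertI:
  assumes kat: "katetov I p d" and k: "k \<notin> I" and h: "0 \<le> h"
    and new: "\<And>i. i \<in> I \<Longrightarrow> \<bar>d i - h\<bar> \<le> dist (p i) y \<and> dist (p i) y \<le> d i + h"
  shows "katetov (insert k I) (p(k := y)) (d(k := h))"
  unfolding katetov_def
proof (intro ballI)
  fix i j assume "i \<in> insert k I" "j \<in> insert k I"
  with k show "\<bar>(d(k := h)) i - (d(k := h)) j\<bar> \<le> dist ((p(k := y)) i) ((p(k := y)) j) \<and>
      dist ((p(k := y)) i) ((p(k := y)) j) \<le> (d(k := h)) i + (d(k := h)) j"
    using katetovD[OF kat] new[of i] new[of j] h
    by (auto simp: dist_commute abs_minus_commute)
qed

definition katetov_defect :: "'i set \<Rightarrow> ('i \<Rightarrow> 'a::metric_space) \<Rightarrow> ('i \<Rightarrow> real) \<Rightarrow> 'a \<Rightarrow> real" where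
  "katetov_defect I p d y = Max ((\<lambda>i. \<bar>dist y (p i) - d i\<bar>) ` I)"

lemma katetov_defect_ge: "finite I \<Longrightarrow> i \<in> I \<Longrightarrow> \<bar>dist y (p i) - d i\<bar> \<le> katetov_defect I p d y"
  unfolding katetov_defect_def by simp

lemma katetov_defect_less_iff:
  "finite I \<Longrightarrow> I \<noteq> {} \<Longrightarrow> katetov_defect I p d y < c \<longleftrightarrow> (\<forall>i\<in>I. \<bar>dist y (p i) - d i\<bar> < c)"
  unfolding katetov_defect_def by simp

lemma katetov_defect_attained:
  "finite I \<Longrightarrow> I \<noteq> {} \<Longrightarrow> \<exists>i\<in>I. katetov_defect I p d y = \<bar>dist y (p i) - d i\<bar>"
  unfolding katetov_defect_def by (metis (no_types, lifting) Max_in finite_imageI image_iff image_is_empty)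

lemma katetov_insert_defect:
  assumes fin: "finite I" and ne: "I \<noteq> {}" and kat: "katetov I p d" and k: "k \<notin> I"
  shows "katetov (insert k I) (p(k := y)) (d(k := katetov_defect I p d y))"
proof (rule katetov_insertI[OF kat k])
  let ?h = "katetov_defect I p d y"
  obtain j where j: "j \<in> I" "?h = \<bar>dist y (p j) - d j\<bar>"
    using katetov_defect_attained[OF fin ne] by blast
  then show "0 \<le> ?h" by simp
  fix i assume i: "i \<in> I"
  have "\<bar>dist y (p i) - d i\<bar> \<le> ?h" using katetov_defect_ge[OF fin i] .
  moreover have "\<bar>d i - d j\<bar> \<le> dist (p i) (p j)" "dist (p i) (p j) \<le> d i + d j"
    using katetovD[OF kat i j(1)] by auto
  moreover have "dist y (p j) \<le> dist y (p i) + dist (p i) (p j)" by (rule dist_triangle)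
  moreover have "dist (p i) (p j) \<le> dist (p i) y + dist y (p j)" by (rule dist_triangle)
  ultimately show "\<bar>d i - ?h\<bar> \<le> dist (p i) y \<and> dist (p i) y \<le> d i + ?h"
    using j(2) by (auto simp: dist_commute abs_le_iff)
qed

definition katetov_ext :: "'i set \<Rightarrow> ('i \<Rightarrow> 'a::metric_space) \<Rightarrow> ('i \<Rightarrow> real) \<Rightarrow> 'a \<Rightarrow> real" where
  "katetov_ext I p d x = Min ((\<lambda>i. d i + dist x (p i)) ` I)"

lemma katetov_ext_le: "finite I \<Longrightarrow> i \<in> I \<Longrightarrow> katetov_ext I p d x \<le> d i + dist x (p i)"
  unfolding katetov_ext_def by simp

lemma katetov_ext_attained:
  "finite I \<Longrightarrow> I \<noteq> {} \<Longrightarrow> \<exists>i\<in>I. katetov_ext I p d x = d i + dist x (p i)"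
  unfolding katetov_ext_def by (metis (no_types, lifting) Min_in finite_imageI image_iff image_is_empty)

lemma katetov_ext_lipschitz:
  assumes "finite I" "I \<noteq> {}"
  shows "\<bar>katetov_ext I p d x - katetov_ext I p d y\<bar> \<le> dist x y"
proof -
  have "katetov_ext I p d x - katetov_ext I p d y \<le> dist x y" for x y
  proof -
    obtain i where "i \<in> I" "katetov_ext I p d y = d i + dist y (p i)"
      using katetov_ext_attained[OF assms] by blast
    then show ?thesis
      using katetov_ext_le[OF assms(1), of i p d x] dist_triangle[of x "p i" y] by simp
  qed
  from this[of x y] this[of y x] show ?thesis by (simp add: dist_commute)
qed

lemma dist_le_katetov_ext_add:
  assumes fin: "finite I" and ne: "I \<noteq> {}" and kat: "katetov I p d"
  shows "dist x y \<le> katetov_ext I p d x + katetov_ext I p d y"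
proof -
  obtain i where i: "i \<in> I" "katetov_ext I p d x = d i + dist x (p i)"
    using katetov_ext_attained[OF fin ne] by blast
  obtain j where j: "j \<in> I" "katetov_ext I p d y = d j + dist y (p j)"
    using katetov_ext_attained[OF fin ne] by blast
  have "dist x y \<le> dist x (p i) + dist (p i) (p j) + dist (p j) y"
    by (metis add_mono dist_triangle order_trans order_refl)
  then show ?thesis
    using i j katetovD(2)[OF kat i(1) j(1)] by (simp add: dist_commute)
qed

lemma katetov_ext_eq:
  assumes fin: "finite I" and kat: "katetov I p d" and i: "i \<in> I"
  shows "katetov_ext I p d (p i) = d i"
proof -
  obtain l where l: "l \<in> I" "katetov_ext I p d (p i) = d l + dist (p i) (p l)"
    using katetov_ext_attained[OF fin, of p d "p i"] i by blast
  show ?thesis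
    using katetov_ext_le[OF fin i, of p d "p i"] katetovD(1)[OF kat i l(1)] l(2) by auto
qed

lemma universal_approx_katetov_function:
  fixes r :: "nat \<Rightarrow> nat \<Rightarrow> real" and e :: "nat \<Rightarrow> 'a::metric_space" and F :: "'a \<Rightarrow> real"
  assumes univ: "universal r"
    and iso: "\<forall>i\<ge>1. \<forall>j\<ge>1. dist (e i) (e j) = r i j"
    and lip: "\<And>x y. \<bar>F x - F y\<bar> \<le> dist x y"
    and add: "\<And>x y. dist x y \<le> F x + F y"
    and eps: "\<epsilon> > 0"
  shows "\<exists>m\<ge>1. \<forall>j\<in>{1..L}. \<bar>dist (e j) (e m) - F (e j)\<bar> < \<epsilon>"
proof -
  have "r i j = dist (e i) (e j)" if "i \<in> {1..L}" "j \<in> {1..L}" for i j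
    using iso that by simp
  then have "(\<lambda>j. F (e j)) \<in> Aset L (corner L r)"
    using lip add by (simp add: Aset_def corner_def)
  then obtain m where "m \<ge> 1" "\<forall>j\<in>{1..L}. \<bar>r j m - F (e j)\<bar> < \<epsilon>"
    using univ eps unfolding universal_def by fastforce
  then show ?thesis
    using iso by auto
qed

lemma universal_approx_realisation:
  fixes r :: "nat \<Rightarrow> nat \<Rightarrow> real" and e :: "nat \<Rightarrow> 'a::metric_space" and p :: "'i \<Rightarrow> 'a"
  assumes univ: "universal r"
    and iso: "\<forall>i\<ge>1. \<forall>j\<ge>1. dist (e i) (e j) = r i j"
    and dense: "closure (e ` {1..}) = UNIV"
    and fin: "finite I" and kat: "katetov I p d" and eps: "\<epsilon> > 0"
  shows "\<exists>x. \<forall>i\<in>I. \<bar>dist x (p i) - d i\<bar> < \<epsilon>"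
proof (cases "I = {}")
  case ne: False
  define \<theta> where "\<theta> = \<epsilon> / 3"
  have \<theta>: "\<theta> > 0" using eps by (simp add: \<theta>_def)
  have "\<exists>m\<ge>1. dist (e m) (p i) < \<theta>" for i
    using \<theta> dense closure_approachable[of "p i" "e ` {1..}"] by auto
  then obtain \<mu> where \<mu>: "\<And>i. \<mu> i \<ge> 1" "\<And>i. dist (e (\<mu> i)) (p i) < \<theta>"
    by metis
  let ?F = "katetov_ext I p d"
  obtain m where m: "\<forall>j\<in>{1..Max (\<mu> ` I)}. \<bar>dist (e j) (e m) - ?F (e j)\<bar> < \<theta>"
    using universal_approx_katetov_function[OF univ iso katetov_ext_lipschitz[OF fin ne]
        dist_le_katetov_ext_add[OF fin ne kat] \<theta>] by blast
  show ?thesis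
  proof (intro exI ballI)
    fix i assume i: "i \<in> I"
    have "\<mu> i \<in> {1..Max (\<mu> ` I)}" using \<mu>(1) fin i by simp
    then have "\<bar>dist (e (\<mu> i)) (e m) - ?F (e (\<mu> i))\<bar> < \<theta>" using m by blast
    moreover have "\<bar>?F (e (\<mu> i)) - d i\<bar> < \<theta>"
      using katetov_ext_lipschitz[OF fin ne, of p d "e (\<mu> i)" "p i"] \<mu>(2)[of i]
        katetov_ext_eq[OF fin kat i] by simp
    moreover have "\<bar>dist (e m) (p i) - dist (e m) (e (\<mu> i))\<bar> < \<theta>"
      using abs_dist_diff_le[of "p i" "e m" "e (\<mu> i)"] \<mu>(2)[of i] by (simp add: dist_commute)
    ultimately show "\<bar>dist (e m) (p i) - d i\<bar> < \<epsilon>"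
      using dist_commute[of "e m" "e (\<mu> i)"] unfolding \<theta>_def abs_less_iff by linarith
  qed
qed simp

lemma dist_le_sum_dist_Suc:
  fixes z :: "nat \<Rightarrow> 'a::metric_space"
  assumes "m \<le> n"
  shows "dist (z m) (z n) \<le> (\<Sum>i=m..<n. dist (z i) (z (Suc i)))"
  using assms
proof (induction n rule: dec_induct)
  case (step n)
  have "dist (z m) (z (Suc n)) \<le> dist (z m) (z n) + dist (z n) (z (Suc n))"
    by (rule dist_triangle)
  with step show ?case by simp
qed simp

lemma summable_dist_Suc_imp_Cauchy:
  fixes z :: "nat \<Rightarrow> 'a::metric_space"
  assumes "summable (\<lambda>n. dist (z n) (z (Suc n)))"
  shows "Cauchy z"
proof (rule CauchyI')
  fix \<epsilon> :: real assume "0 < \<epsilon>"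
  then obtain M where M: "\<forall>m\<ge>M. \<forall>n. norm (\<Sum>i=m..<n. dist (z i) (z (Suc i))) < \<epsilon>"
    using assms unfolding summable_Cauchy by blast
  show "\<exists>M. \<forall>m\<ge>M. \<forall>n>m. dist (z m) (z n) < \<epsilon>"
  proof (intro exI allI impI)
    fix m n assume "M \<le> m" "m < n"
    then have "norm (\<Sum>i=m..<n. dist (z i) (z (Suc i))) < \<epsilon>" using M by blast
    moreover have "(\<Sum>i=m..<n. dist (z i) (z (Suc i))) \<ge> 0" by (simp add: sum_nonneg)
    ultimately show "dist (z m) (z n) < \<epsilon>"
      using dist_le_sum_dist_Suc[of m n z] \<open>m < n\<close> by simp
  qed
qed

lemma approx_realisation_near:
  fixes p :: "nat \<Rightarrow> 'a::metric_space"
  assumes approx: "\<forall>J (p' :: nat \<Rightarrow> 'a) d' \<epsilon>. finite J \<longrightarrow> katetov J p' d' \<longrightarrow> \<epsilon> > 0 \<longrightarrow>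
                     (\<exists>x. \<forall>i\<in>J. \<bar>dist x (p' i) - d' i\<bar> < \<epsilon>)"
    and fin: "finite I" and ne: "I \<noteq> {}" and kat: "katetov I p d" and eps: "\<epsilon> > 0"
  shows "\<exists>x. katetov_defect I p d x < \<epsilon> \<and> dist x y < katetov_defect I p d y + \<epsilon>"
proof -
  obtain k where k: "k \<notin> I" using fin ex_new_if_finite infinite_UNIV_nat by blast
  obtain x where x: "\<forall>i\<in>insert k I.
      \<bar>dist x ((p(k := y)) i) - (d(k := katetov_defect I p d y)) i\<bar> < \<epsilon>"
    using approx[rule_format, OF finite_insert[THEN iffD2, OF fin]
        katetov_insert_defect[OF fin ne kat k] eps]
    by blast
  then have "\<forall>i\<in>I. \<bar>dist x (p i) - d i\<bar> < \<epsilon>"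
    using k by (metis fun_upd_other insertCI)
  moreover have "\<bar>dist x y - katetov_defect I p d y\<bar> < \<epsilon>" using x by simp
  ultimately show ?thesis
    by (intro exI[of _ x]) (auto simp: katetov_defect_less_iff[OF fin ne] abs_less_iff)
qed

lemma complete_exact_realisation:
  fixes p :: "nat \<Rightarrow> 'a::complete_space"
  assumes approx: "\<forall>J (p' :: nat \<Rightarrow> 'a) d' \<epsilon>. finite J \<longrightarrow> katetov J p' d' \<longrightarrow> \<epsilon> > 0 \<longrightarrow>
                     (\<exists>x. \<forall>i\<in>J. \<bar>dist x (p' i) - d' i\<bar> < \<epsilon>)"
    and fin: "finite I" and kat: "katetov I p d"
  shows "\<exists>x. \<forall>i\<in>I. dist x (p i) = d i"
proof (cases "I = {}")
  case ne: False
  let ?\<delta> = "katetov_defect I p d"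
  have near: "\<exists>x. ?\<delta> x < (1/2)^n \<and> dist x y < ?\<delta> y + (1/2)^n" for y and n :: nat
    by (rule approx_realisation_near[OF approx fin ne kat]) simp
  define F where "F y n = (SOME x. ?\<delta> x < (1/2)^n \<and> dist x y < ?\<delta> y + (1/2)^n)" for y n
  have F: "?\<delta> (F y n) < (1/2)^n \<and> dist (F y n) y < ?\<delta> y + (1/2)^n" for y n
    unfolding F_def by (rule someI_ex[OF near])
  define z where "z = rec_nat (F undefined 0) (\<lambda>n y. F y (Suc n))"
  have z_Suc: "z (Suc n) = F (z n) (Suc n)" for n
    by (simp add: z_def)
  have \<delta>_z: "?\<delta> (z n) < (1/2)^n" for n
  proof (cases n)
    case 0
    then show ?thesis using F[of undefined 0] by (simp add: z_def)
  next
    case (Suc m)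
    then show ?thesis using F[of "z m" "Suc m"] by (simp add: z_Suc)
  qed
  have step: "dist (z n) (z (Suc n)) \<le> 2 * (1/2)^n" for n
  proof -
    have "dist (z n) (z (Suc n)) < ?\<delta> (z n) + (1/2)^Suc n"
      using F[of "z n" "Suc n"] by (simp add: z_Suc dist_commute)
    moreover have "(1/2::real)^Suc n \<le> (1/2)^n" by simp
    ultimately show ?thesis using \<delta>_z[of n] by linarith
  qed
  have "summable (\<lambda>n. 2 * (1/2::real)^n)"
    by (intro summable_mult summable_geometric) simp
  then have "summable (\<lambda>n. dist (z n) (z (Suc n)))"
    by (rule summable_comparison_test') (simp add: step)
  then have "Cauchy z" by (rule summable_dist_Suc_imp_Cauchy)
  then obtain x where x: "z \<longlonglongrightarrow> x"
    using Cauchy_convergent unfolding convergent_def by blast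
  have "\<bar>dist x (p i) - d i\<bar> \<le> 0" if i: "i \<in> I" for i
  proof (rule LIMSEQ_le_const)
    have "(\<lambda>n. (1/2::real)^n) \<longlonglongrightarrow> 0" by (rule LIMSEQ_realpow_zero) auto
    moreover have "(\<lambda>n. dist (z n) x) \<longlonglongrightarrow> 0" using x by (rule tendsto_dist_iff[THEN iffD1])
    ultimately show "(\<lambda>n. (1/2)^n + dist (z n) x) \<longlonglongrightarrow> 0" by (rule tendsto_add_zero)
    show "\<exists>N. \<forall>n\<ge>N. \<bar>dist x (p i) - d i\<bar> \<le> (1/2)^n + dist (z n) x"
    proof (intro exI allI impI)
      fix n
      have "\<bar>dist (z n) (p i) - d i\<bar> < (1/2)^n"
        using katetov_defect_ge[OF fin i] \<delta>_z[of n] by (rule le_less_trans)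
      moreover have "\<bar>dist x (p i) - dist (z n) (p i)\<bar> \<le> dist (z n) x"
        using abs_dist_diff_le[of x "p i" "z n"] by (simp add: dist_commute)
      ultimately show "\<bar>dist x (p i) - d i\<bar> \<le> (1/2)^n + dist (z n) x"
        unfolding abs_less_iff abs_le_iff by linarith
    qed
  qed
  then show ?thesis by (intro exI[of _ x]) simp
qed simp

lemma distance_matrix_column_katetov:
  assumes q: "distance_matrix N q" and I: "I \<subseteq> {1..N}" and j: "j \<in> {1..N}"
    and p: "\<forall>i\<in>I. \<forall>l\<in>I. dist (p i) (p l) = q i l"
  shows "katetov I p (\<lambda>i. q i j)"
  unfolding katetov_def
proof (intro ballI)
  fix i l assume i: "i \<in> I" and l: "l \<in> I"
  have "i \<in> {1..N}" "l \<in> {1..N}" using i l I by auto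
  with q j have "q i j \<le> q i l + q l j" "q l j \<le> q l i + q i j" "q i l \<le> q i j + q j l"
    "q i l = q l i" "q l j = q j l"
    unfolding distance_matrix_def by blast+
  then show "\<bar>q i j - q l j\<bar> \<le> dist (p i) (p l) \<and> dist (p i) (p l) \<le> q i j + q l j"
    using p i l by (simp add: abs_le_iff)
qed

lemma extend_realisation_of_distance_matrix:
  fixes a :: "nat \<Rightarrow> 'a::metric_space"
  assumes exact: "\<forall>I (p :: nat \<Rightarrow> 'a) d. finite I \<longrightarrow> katetov I p d \<longrightarrow>
                    (\<exists>x. \<forall>i\<in>I. dist x (p i) = d i)"
    and q: "distance_matrix N q" and nN: "n \<le> N"
    and a: "\<forall>i\<in>{1..n}. \<forall>j\<in>{1..n}. dist (a i) (a j) = q i j"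
  shows "\<exists>b. (\<forall>i\<in>{1..n}. b i = a i) \<and> (\<forall>i\<in>{1..N}. \<forall>j\<in>{1..N}. dist (b i) (b j) = q i j)"
proof -
  have "\<exists>b. (\<forall>i\<in>{1..n}. b i = a i) \<and> (\<forall>i\<in>{1..k}. \<forall>j\<in>{1..k}. dist (b i) (b j) = q i j)"
    if "n \<le> k" "k \<le> N" for k
    using that
  proof (induction k rule: dec_induct)
    case base
    show ?case using a by blast
  next
    case (step k)
    then obtain b where b_a: "\<forall>i\<in>{1..n}. b i = a i"
      and b_q: "\<forall>i\<in>{1..k}. \<forall>j\<in>{1..k}. dist (b i) (b j) = q i j" by auto
    have "katetov {1..k} b (\<lambda>i. q i (Suc k))"
      using step.prems b_q by (intro distance_matrix_column_katetov[OF q]) auto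
    then obtain x where x: "\<forall>i\<in>{1..k}. dist x (b i) = q i (Suc k)"
      using exact[rule_format, OF finite_atLeastAtMost] by blast
    have q_Suc: "q (Suc k) (Suc k) = 0" "\<forall>i\<in>{1..k}. q (Suc k) i = q i (Suc k)"
      using q step.prems unfolding distance_matrix_def by auto
    show ?case
    proof (intro exI[of _ "b(Suc k := x)"] conjI ballI)
      fix i assume "i \<in> {1..n}"
      then show "(b(Suc k := x)) i = a i" using b_a step.hyps by auto
    next
      fix i j assume "i \<in> {1..Suc k}" "j \<in> {1..Suc k}"
      then consider "i = Suc k" "j = Suc k" | "i = Suc k" "j \<in> {1..k}" | "i \<in> {1..k}" "j = Suc k"
        | "i \<in> {1..k}" "j \<in> {1..k}"
        by fastforce
      then show "dist ((b(Suc k := x)) i) ((b(Suc k := x)) j) = q i j"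
        by cases (use b_q x q_Suc in \<open>auto simp: dist_commute\<close>)
    qed
  qed
  then show ?thesis using nN by blast
qed

theorem corollary4:
  fixes r :: "nat \<Rightarrow> nat \<Rightarrow> real"
    and e :: "nat \<Rightarrow> 'a::{metric_space, complete_space}"
    and a :: "nat \<Rightarrow> 'a"
    and q :: "nat \<Rightarrow> nat \<Rightarrow> real"
    and n N :: nat
  assumes univ: "universal r"
    and iso: "\<forall>i\<ge>1. \<forall>j\<ge>1. dist (e i) (e j) = r i j"
    and dense: "closure (e ` {1..}) = UNIV"
    and a_inj: "inj_on a {1..n}"
    and nN: "n < N"
    and q_dm: "distance_matrix N q"
    and q_corner: "\<forall>i\<in>{1..n}. \<forall>j\<in>{1..n}. q i j = dist (a i) (a j)"
  shows "\<exists>b :: nat \<Rightarrow> 'a. (\<forall>i\<in>{1..n}. b i = a i) \<and>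
           (\<forall>i\<in>{1..N}. \<forall>j\<in>{1..N}. dist (b i) (b j) = q i j)"
proof (rule extend_realisation_of_distance_matrix[OF _ q_dm])
  have approx: "\<forall>I (p :: nat \<Rightarrow> 'a) d \<epsilon>. finite I \<longrightarrow> katetov I p d \<longrightarrow> \<epsilon> > 0 \<longrightarrow>
                  (\<exists>x. \<forall>i\<in>I. \<bar>dist x (p i) - d i\<bar> < \<epsilon>)"
    using universal_approx_realisation[OF univ iso dense] by blast
  then show "\<forall>I (p :: nat \<Rightarrow> 'a) d. finite I \<longrightarrow> katetov I p d \<longrightarrow>
               (\<exists>x. \<forall>i\<in>I. dist x (p i) = d i)"
    by (blast intro: complete_exact_realisation)
qed (use nN q_corner in auto)

end
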